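(* Let $1\le m\le N$, $a\in V$ and $b\in\wedge^m(V)$. Then $\mathbf{x}\wedge b\in\mathcal{P}_1\otimes\wedge^{m+1}(V)$ and $$\sum_{i=1}^Na_i\mathcal{D}_i(\mathbf{x}\wedge b)=(1-\gamma\kappa)\,a\wedge b,$$ where the $\mathcal{D}_i$ are the Dunkl operators on $\mathcal{P}\otimes\wedge^{m+1}(V)$. In particular $\mathbf{x}\wedge b$ is singular for $\kappa=1/\gamma$, i.e. $\mathcal{D}_i(\mathbf{x}\wedge b)=0$ for all $1\le i\le N$ when $\kappa=1/\gamma$.
   Context: $R\subset\mathbb{R}^N$ is a reduced root system with $\operatorname{span}_{\mathbb{R}}R=\mathbb{R}^N$, $|v|^2=2$ for all $v\in R$, positive roots $R_+$; $W$ is the reflection group generated by $\sigma_v\colon x\mapsto x-\langle x,v\rangle v$, assumed to have one conjugacy class of reflections, so $W$ is indecomposable and its reflection representation $\tau$ on $V=\mathbb{R}^N$ is irreducible. $\gamma:=2\#R_+/N$ (the Coxeter number). $\{u_i\}$ is the standard orthonormal basis of $V$ and $\mathbf{x}:=\sum_{i=1}^Nx_i\otimes u_i\in\mathcal{P}_1\otimes V$, where $\mathcal{P}_1$ denotes linear polynomials in $x=(x_1,\dots,x_N)$; wedge products with $\mathbf{x}$ are taken in the $\wedge$-factor. $\tau_k$ is the representation of $W$ on $\wedge^k(V)$ induced by $\tau$. $W$ acts on $\mathcal{P}\otimes\wedge^k(V)$ by $w(p(x)\otimes b)=p(xw)\otimes\tau_k(w)b$, and the Dunkl operators (with constant parameter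 $\kappa$) are $\mathcal{D}_i(p\otimes b)=\frac{\partial p}{\partial x_i}\otimes b+\kappa\sum_{v\in R_+}\frac{p(x)-p(x\sigma_v)}{\langle x,v\rangle}v_i\otimes\tau_k(\sigma_v)b$, extended linearly. *)

theory Defs
  imports "HOL-Analysis.Analysis"
begin

text \<open>V = real^'n with standard orthonormal basis axis i 1.
  An element of the exterior power of degree k is represented by its
  alternating coefficient function on lists of indices: b is supported on
  lists of length k and changes sign when two positions are swapped;
  b corresponds to the sum over increasing index lists I of b I times u_I.\<close>

definition ext_space :: "nat \<Rightarrow> ('n list \<Rightarrow> real) set" where
  "ext_space k = {b. (\<forall>l. length l \<noteq> k \<longrightarrow> b l = 0) \<and>
      (\<forall>l i j. i < length l \<longrightarrow> j < length l \<longrightarrow> i \<noteq> j \<longrightarrow>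
          b (l[i := l ! j, j := l ! i]) = - b l)}"

definition wedge :: "real^'n \<Rightarrow> ('n list \<Rightarrow> real) \<Rightarrow> ('n list \<Rightarrow> real)" where
  "wedge a b = (\<lambda>l. \<Sum>j<length l. (-1) ^ j * (a $ (l ! j)) * b (take j l @ drop (Suc j) l))"

text \<open>Reflection along v (for roots, |v|^2 = 2).\<close>
definition refl :: "real^'n \<Rightarrow> real^'n \<Rightarrow> real^'n" where
  "refl v x = x - (x \<bullet> v) *\<^sub>R v"

definition tau :: "(real^'n \<Rightarrow> real^'n) \<Rightarrow> ('n list \<Rightarrow> real) \<Rightarrow> ('n list \<Rightarrow> real)" where
  "tau g b = (\<lambda>l. \<Sum>js \<in> {js. set js \<subseteq> UNIV \<and> length js = length l}.
       (\<Prod>t<length l. g (axis (js ! t) 1) $ (l ! t)) * b js)"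

inductive_set refl_group :: "(real^'n) set \<Rightarrow> (real^'n \<Rightarrow> real^'n) set" for R where
  id_in: "id \<in> refl_group R"
| step: "v \<in> R \<Longrightarrow> w \<in> refl_group R \<Longrightarrow> refl v \<circ> w \<in> refl_group R"

text \<open>Reduced root system (Coxeter type: not necessarily crystallographic),
  normalised |v|^2 = 2, spanning V.\<close>
definition root_system :: "(real^'n) set \<Rightarrow> bool" where
  "root_system R \<longleftrightarrow> finite R \<and> 0 \<notin> R \<and> span R = UNIV \<and>
     (\<forall>v\<in>R. v \<bullet> v = 2) \<and> (\<forall>u\<in>R. \<forall>v\<in>R. refl u v \<in> R) \<and>
     (\<forall>v\<in>R. \<forall>c::real. c *\<^sub>R v \<in> R \<longrightarrow> c = 1 \<or> c = -1)"

definition positive_system :: "(real^'n) set \<Rightarrow> (real^'n) set \<Rightarrow> bool" where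
  "positive_system R Rp \<longleftrightarrow> (\<exists>u. (\<forall>v\<in>R. v \<bullet> u \<noteq> 0) \<and> Rp = {v\<in>R. v \<bullet> u > 0})"

text \<open>All reflections of W are conjugate: w sigma_u w^-1 = sigma_(w u).\<close>
definition one_refl_class :: "(real^'n) set \<Rightarrow> bool" where
  "one_refl_class R \<longleftrightarrow> (\<forall>u\<in>R. \<forall>v\<in>R. \<exists>w\<in>refl_group R. refl (w u) = refl v)"

definition coxeter_number :: "(real^'n) set \<Rightarrow> real" where
  "coxeter_number Rp = 2 * real (card Rp) / real CARD('n)"

definition dderiv :: "real^'n \<Rightarrow> (real^'n \<Rightarrow> 'a \<Rightarrow> real) \<Rightarrow> real^'n \<Rightarrow> 'a \<Rightarrow> real" where
  "dderiv v f x = (\<lambda>l. deriv (\<lambda>t. f (x + t *\<^sub>R v) l) 0)"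

text \<open>(f(x) - f(x sigma_v)) / <x,v>, extended continuously (for polynomial f) to
  the hyperplane <x,v> = 0, where the value is the directional derivative along v.\<close>
definition dquot :: "real^'n \<Rightarrow> (real^'n \<Rightarrow> 'a \<Rightarrow> real) \<Rightarrow> real^'n \<Rightarrow> 'a \<Rightarrow> real" where
  "dquot v f x = (if x \<bullet> v = 0 then dderiv v f x
                  else (\<lambda>l. (f x l - f (refl v x) l) / (x \<bullet> v)))"

definition dunkl :: "(real^'n) set \<Rightarrow> real \<Rightarrow> 'n \<Rightarrow> (real^'n \<Rightarrow> 'n list \<Rightarrow> real)
                      \<Rightarrow> real^'n \<Rightarrow> 'n list \<Rightarrow> real" where
  "dunkl Rp \<kappa> i f x = (\<lambda>l. dderiv (axis i 1) f x l +
      \<kappa> * (\<Sum>v\<in>Rp. v $ i * tau (refl v) (dquot v f x) l))"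

end

theory Submission
  imports Defs
begin

text \<open>For alternating c the induced action of a reflection is
  \<open>\<tau>(\<sigma>\<^sub>v) c = c - v \<and> \<iota>\<^sub>v c\<close>, where \<open>\<iota>\<^sub>v\<close> (\<open>contract v\<close>) is contraction with v.
  Since \<open>\<iota>\<^sub>v (v \<and> b) = |v|\<^sup>2 b - v \<and> \<iota>\<^sub>v b\<close>, a root v acts on \<open>v \<and> b\<close> by \<open>1 - |v|\<^sup>2 = -1\<close>.
  As \<open>x \<mapsto> x \<and> b\<close> is linear, its difference quotient along v is the constant \<open>v \<and> b\<close>,
  hence \<open>D\<^sub>i (x \<and> b) = (e\<^sub>i - \<kappa> M e\<^sub>i) \<and> b\<close> with \<open>M x = \<Sum> {\<langle>x,v\<rangle> v | v \<in> R\<^sub>+}\<close>.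
  Finally M commutes with W and has every root as an eigenvector; the eigenvalues agree
  because all reflections are conjugate, so M is a scalar because the roots span V, and
  comparing traces shows that the scalar is \<open>\<gamma>\<close>.\<close>

section \<open>Alternating coefficient functions\<close>

definition list_swap :: "nat \<Rightarrow> nat \<Rightarrow> 'a list \<Rightarrow> 'a list" where
  "list_swap i j l = l[i := l ! j, j := l ! i]"

text \<open>Only adjacent transpositions are required here, which is what list induction sees;
  \<open>alternating_list_swap\<close> recovers arbitrary ones.\<close>
definition alternating :: "('a list \<Rightarrow> real) \<Rightarrow> bool" where
  "alternating c \<longleftrightarrow> (\<forall>l k. Suc k < length l \<longrightarrow> c (list_swap k (Suc k) l) = - c l)"

lemma length_list_swap [simp]: "length (list_swap i j l) = length l"
  by (simp add: list_swap_def)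

lemma list_swap_Cons: "list_swap (Suc i) (Suc j) (x # l) = x # list_swap i j l"
  by (simp add: list_swap_def)

lemma list_swap_0_1: "list_swap 0 (Suc 0) (x # y # l) = y # x # l"
  by (simp add: list_swap_def)

lemma alternating_Cons_Cons: "alternating c \<Longrightarrow> c (k # i # l) = - c (i # k # l)"
  unfolding alternating_def by (metis list_swap_0_1 length_Cons zero_less_Suc Suc_less_eq)

lemma alternating_Cons: "alternating c \<Longrightarrow> alternating (\<lambda>l. c (i # l))"
  unfolding alternating_def by (metis list_swap_Cons length_Cons Suc_less_eq)

lemma list_swap_conj_adjacent:
  assumes "Suc (Suc i + d) < length l"
  shows "list_swap i (i + Suc (Suc d)) l =
    list_swap i (Suc i) (list_swap (Suc i) (Suc i + Suc d) (list_swap i (Suc i) l))"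
  using assms by (auto simp: list_swap_def nth_list_update intro!: nth_equalityI)

lemma alternating_list_swap_less:
  assumes "alternating c" and "i + Suc d < length l"
  shows "c (list_swap i (i + Suc d) l) = - c l"
  using assms(2)
proof (induction d arbitrary: i l)
  case 0
  then show ?case using assms(1) unfolding alternating_def by simp
next
  case (Suc d)
  have adj: "c (list_swap i (Suc i) l') = - c l'" if "length l' = length l" for l'
    using assms(1) Suc.prems that unfolding alternating_def by simp
  have "c (list_swap i (i + Suc (Suc d)) l) =
      c (list_swap i (Suc i) (list_swap (Suc i) (Suc i + Suc d) (list_swap i (Suc i) l)))"
    using Suc.prems by (simp only: list_swap_conj_adjacent)
  also have "\<dots> = - c (list_swap (Suc i) (Suc i + Suc d) (list_swap i (Suc i) l))"
    by (simp add: adj)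
  also have "\<dots> = c (list_swap i (Suc i) l)"
    using Suc.IH[of "Suc i" "list_swap i (Suc i) l"] Suc.prems by simp
  also have "\<dots> = - c l"
    by (simp add: adj)
  finally show ?case .
qed

lemma alternating_list_swap:
  assumes "alternating c" and "i < length l" "j < length l" "i \<noteq> j"
  shows "c (list_swap i j l) = - c l"
proof (cases "i < j")
  case True
  then have "j = i + Suc (j - i - 1)" by simp
  then show ?thesis
    using alternating_list_swap_less[OF assms(1), of i "j - i - 1" l] assms by simp
next
  case False
  then have "i = j + Suc (i - j - 1)" using assms(4) by simp
  moreover have "list_swap i j l = list_swap j i l"
    unfolding list_swap_def using assms(4) by (rule list_update_swap)
  ultimately show ?thesis
    using alternating_list_swap_less[OF assms(1), of j "i - j - 1" l] assms by simp
qed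

lemma ext_space_alternating: "b \<in> ext_space m \<Longrightarrow> alternating b"
  unfolding ext_space_def alternating_def list_swap_def by simp

lemma ext_space_iff_alternating:
  "b \<in> ext_space m \<longleftrightarrow> (\<forall>l. length l \<noteq> m \<longrightarrow> b l = 0) \<and> alternating b"
  using alternating_list_swap[of b] ext_space_alternating[of b m]
  unfolding ext_space_def list_swap_def by blast

section \<open>Wedge product, contraction and the action of reflections\<close>

lemma wedge_Nil [simp]: "wedge a c [] = 0"
  by (simp add: wedge_def)

lemma wedge_Cons: "wedge a c (i # l) = a $ i * c l - wedge a (\<lambda>l. c (i # l)) l"
proof -
  have "wedge a c (i # l) = (\<Sum>j<Suc (length l). (-1) ^ j * a $ ((i # l) ! j) *
      c (take j (i # l) @ drop (Suc j) (i # l)))"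
    unfolding wedge_def by simp
  also have "\<dots> = a $ i * c l + (\<Sum>j<length l. (-1) ^ Suc j * a $ (l ! j) *
      c (i # take j l @ drop (Suc j) l))"
    by (subst sum.lessThan_Suc_shift) simp
  also have "\<dots> = a $ i * c l - wedge a (\<lambda>l. c (i # l)) l"
    unfolding wedge_def by (simp add: sum_negf[symmetric])
  finally show ?thesis .
qed

lemma linear_wedge: "linear (\<lambda>x. wedge x c l)"
  by (rule linearI) (simp_all add: wedge_def sum.distrib sum_distrib_left algebra_simps)

lemma wedge_add_left: "wedge (x + y) c l = wedge x c l + wedge y c l"
  using linear_add[OF linear_wedge] by blast

lemma wedge_diff_left: "wedge (x - y) c l = wedge x c l - wedge y c l"
  using linear_diff[OF linear_wedge] by blast

lemma wedge_scaleR_left: "wedge (t *\<^sub>R x) c l = t * wedge x c l"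
  using linear_scale[OF linear_wedge] by simp

lemma wedge_sum_left: "wedge (\<Sum>v\<in>S. f v) c l = (\<Sum>v\<in>S. wedge (f v) c l)"
  using linear_sum[OF linear_wedge] by blast

lemma wedge_sum_right: "wedge a (\<lambda>l. \<Sum>k\<in>S. f k l) l = (\<Sum>k\<in>S. wedge a (f k) l)"
  unfolding wedge_def by (simp add: sum_distrib_left algebra_simps sum.swap[of _ S])

lemma wedge_mult_right: "wedge a (\<lambda>l. t * c l) l = t * wedge a c l"
  unfolding wedge_def by (simp add: sum_distrib_left algebra_simps)

lemma wedge_diff_right: "wedge a (\<lambda>l. c l - d l) l = wedge a c l - wedge a d l"
  unfolding wedge_def by (simp add: sum_subtractf[symmetric] algebra_simps)

lemma wedge_minus_right: "wedge a (\<lambda>l. - c l) l = - wedge a c l"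
  using wedge_mult_right[of a "-1" c l] by simp

lemma wedge_zero_right: "wedge a (\<lambda>l. 0) l = 0"
  using wedge_mult_right[of a 0 c l] by simp

lemma wedge_wedge_self: "wedge v (wedge v c) l = 0"
proof (induction l arbitrary: c)
  case (Cons i l)
  have "(\<lambda>l. wedge v c (i # l)) = (\<lambda>l. v $ i * c l - wedge v (\<lambda>l. c (i # l)) l)"
    by (simp add: wedge_Cons)
  then show ?case
    by (simp add: wedge_Cons wedge_diff_right wedge_mult_right Cons.IH)
qed simp

lemma alternating_wedge:
  assumes "alternating b"
  shows "alternating (wedge a b)"
proof -
  have "wedge a b (list_swap k (Suc k) l) = - wedge a b l" if "Suc k < length l" for k l
    using assms that
  proof (induction l arbitrary: k b)
    case (Cons i l)
    show ?case
    proof (cases k)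
      case 0
      then obtain i' l' where "l = i' # l'" using Cons.prems(2) by (cases l) auto
      moreover have "(\<lambda>l. b (i' # i # l)) = (\<lambda>l. - b (i # i' # l))"
        using alternating_Cons_Cons[OF Cons.prems(1)] by blast
      ultimately show ?thesis using 0
        by (simp add: list_swap_0_1 wedge_Cons wedge_minus_right)
    next
      case (Suc k')
      have "wedge a (\<lambda>l. b (i # l)) (list_swap k' (Suc k') l) = - wedge a (\<lambda>l. b (i # l)) l"
        using Cons.IH[OF alternating_Cons[OF Cons.prems(1)]] Cons.prems(2) Suc by simp
      moreover have "b (list_swap k' (Suc k') l) = - b l"
        using Cons.prems Suc unfolding alternating_def by simp
      ultimately show ?thesis using Suc
        by (simp add: list_swap_Cons wedge_Cons)
    qed
  qed simp
  then show ?thesis unfolding alternating_def by blast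
qed

lemma wedge_in_ext_space:
  assumes "b \<in> ext_space m"
  shows "wedge x b \<in> ext_space (Suc m)"
proof -
  have "wedge x b l = 0" if "length l \<noteq> Suc m" for l
    unfolding wedge_def
  proof (intro sum.neutral ballI)
    fix j assume "j \<in> {..<length l}"
    then have "length (take j l @ drop (Suc j) l) \<noteq> m" using that by auto
    then show "(-1) ^ j * x $ (l ! j) * b (take j l @ drop (Suc j) l) = 0"
      using assms unfolding ext_space_def by simp
  qed
  then show ?thesis
    using alternating_wedge[OF ext_space_alternating[OF assms]]
    by (simp add: ext_space_iff_alternating)
qed

definition contract :: "real^'n \<Rightarrow> ('n list \<Rightarrow> real) \<Rightarrow> 'n list \<Rightarrow> real" where
  "contract v c = (\<lambda>l. \<Sum>k\<in>UNIV. v $ k * c (k # l))"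

lemma contract_Cons:
  assumes "alternating c"
  shows "(\<lambda>l. contract v c (i # l)) = (\<lambda>l. - contract v (\<lambda>l. c (i # l)) l)"
proof
  fix l
  have "c (k # i # l) = - c (i # k # l)" for k
    using assms by (rule alternating_Cons_Cons)
  then show "contract v c (i # l) = - contract v (\<lambda>l. c (i # l)) l"
    unfolding contract_def by (simp add: sum_negf[symmetric])
qed

lemma alternating_contract: "alternating c \<Longrightarrow> alternating (contract v c)"
  unfolding alternating_def contract_def
  by (auto simp: list_swap_Cons[symmetric] sum_negf[symmetric])

lemma contract_contract:
  assumes "alternating c"
  shows "contract v (contract v c) l = 0"
proof -
  define S where "S = (\<Sum>k\<in>UNIV. \<Sum>k'\<in>UNIV. v $ k * v $ k' * c (k' # k # l))"
  have "S = (\<Sum>k\<in>UNIV. \<Sum>k'\<in>UNIV. v $ k' * v $ k * c (k # k' # l))"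
    unfolding S_def by (rule sum.swap)
  also have "\<dots> = (\<Sum>k\<in>UNIV. \<Sum>k'\<in>UNIV. - (v $ k * v $ k' * c (k' # k # l)))"
  proof (intro sum.cong refl)
    fix k k'
    show "v $ k' * v $ k * c (k # k' # l) = - (v $ k * v $ k' * c (k' # k # l))"
      using alternating_Cons_Cons[OF assms, of k k' l] by simp
  qed
  also have "\<dots> = - S"
    unfolding S_def by (simp add: sum_negf)
  finally have "S = 0" by simp
  then show ?thesis
    unfolding contract_def S_def by (simp add: sum_distrib_left mult.assoc)
qed

lemma contract_wedge: "contract v (wedge v b) = (\<lambda>l. (v \<bullet> v) * b l - wedge v (contract v b) l)"
  unfolding contract_def
  by (simp add: wedge_Cons wedge_sum_right wedge_mult_right right_diff_distrib sum_subtractf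
      inner_vec_def sum_distrib_right mult.assoc)

lemma lists_length_Suc:
  "{l. length l = Suc n} = (\<lambda>(k, l). k # l) ` (UNIV \<times> {l. length l = n})"
  by (auto simp: length_Suc_conv image_iff)

lemma tau_Nil [simp]: "tau g c [] = c []"
  unfolding tau_def by simp

lemma tau_Cons: "tau g c (i # l) = (\<Sum>k\<in>UNIV. g (axis k 1) $ i * tau g (\<lambda>l. c (k # l)) l)"
proof -
  let ?L = "{js::'n list. length js = length l}"
  have "tau g c (i # l) = (\<Sum>js\<in>(\<lambda>(k, js). k # js) ` (UNIV \<times> ?L).
      (\<Prod>t<Suc (length l). g (axis (js ! t) 1) $ ((i # l) ! t)) * c js)"
    unfolding tau_def by (simp only: length_Cons lists_length_Suc subset_UNIV simp_thms)
  also have "\<dots> = (\<Sum>(k, js)\<in>UNIV \<times> ?L.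
      (\<Prod>t<Suc (length l). g (axis ((k # js) ! t) 1) $ ((i # l) ! t)) * c (k # js))"
    by (subst sum.reindex) (auto simp: inj_on_def intro!: sum.cong)
  also have "\<dots> = (\<Sum>k\<in>UNIV. \<Sum>js\<in>?L.
      g (axis k 1) $ i * ((\<Prod>t<length l. g (axis (js ! t) 1) $ (l ! t)) * c (k # js)))"
    by (simp del: prod.lessThan_Suc
        add: sum.cartesian_product[symmetric] prod.lessThan_Suc_shift mult.assoc)
  also have "\<dots> = (\<Sum>k\<in>UNIV. g (axis k 1) $ i * tau g (\<lambda>l. c (k # l)) l)"
    unfolding tau_def by (simp add: sum_distrib_left)
  finally show ?thesis .
qed

lemma tau_sum_right: "tau g (\<lambda>l. \<Sum>k\<in>S. f k l) l = (\<Sum>k\<in>S. tau g (f k) l)"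
  unfolding tau_def by (simp add: sum_distrib_left sum.swap[of _ S])

lemma tau_mult_right: "tau g (\<lambda>l. t * c l) l = t * tau g c l"
  unfolding tau_def by (simp add: sum_distrib_left algebra_simps)

lemma refl_axis_nth: "refl v (axis k 1) $ i = (if k = i then 1 else 0) - v $ k * v $ i"
  unfolding refl_def by (simp add: inner_axis') (simp add: axis_def)

text \<open>The reflection \<open>\<sigma>\<^sub>v = 1 - v v\<^sup>T\<close> is a rank-one perturbation of the identity, so its
  induced action is the identity minus a derivation; no normalisation of v is needed.\<close>
lemma tau_refl:
  assumes "alternating c"
  shows "tau (refl v) c l = c l - wedge v (contract v c) l"
  using assms
proof (induction l arbitrary: c)
  case (Cons i l)
  let ?T = "\<lambda>k. tau (refl v) (\<lambda>l. c (k # l)) l"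
  have contr: "tau (refl v) (contract v c) l = (\<Sum>k\<in>UNIV. v $ k * ?T k)"
    unfolding contract_def by (simp add: tau_sum_right tau_mult_right)
  have "tau (refl v) c (i # l) = (\<Sum>k\<in>UNIV. ((if k = i then 1 else 0) - v $ k * v $ i) * ?T k)"
    by (simp add: tau_Cons refl_axis_nth)
  also have "\<dots> = (\<Sum>k\<in>UNIV. (if k = i then ?T k else 0) - v $ i * (v $ k * ?T k))"
    by (intro sum.cong refl) (simp add: algebra_simps)
  also have "\<dots> = ?T i - v $ i * tau (refl v) (contract v c) l"
    unfolding contr by (simp add: sum_subtractf sum_distrib_left)
  also have "\<dots> = c (i # l) - wedge v (contract v c) (i # l)"
  proof -
    have "contract v (contract v c) = (\<lambda>l. 0)"
      using contract_contract[OF Cons.prems] by blast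
    then have "tau (refl v) (contract v c) l = contract v c l"
      using Cons.IH[OF alternating_contract[OF Cons.prems]] by (simp add: wedge_zero_right)
    moreover have "?T i = c (i # l) - wedge v (contract v (\<lambda>l. c (i # l))) l"
      using Cons.IH[OF alternating_Cons[OF Cons.prems]] .
    ultimately show ?thesis
      by (simp add: wedge_Cons contract_Cons[OF Cons.prems] wedge_minus_right)
  qed
  finally show ?case .
qed simp

lemma tau_refl_wedge_self:
  assumes "alternating b"
  shows "tau (refl v) (wedge v b) l = (1 - v \<bullet> v) * wedge v b l"
proof -
  have "wedge v (contract v (wedge v b)) l = (v \<bullet> v) * wedge v b l"
    by (simp add: contract_wedge wedge_diff_right wedge_mult_right wedge_wedge_self)
  moreover have "tau (refl v) (wedge v b) l = wedge v b l - wedge v (contract v (wedge v b)) l"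
    by (rule tau_refl[OF alternating_wedge[OF assms]])
  ultimately show ?thesis
    by (simp add: algebra_simps)
qed

lemma dderiv_wedge: "dderiv u (\<lambda>y. wedge y b) x = wedge u b"
proof
  fix l
  have "((\<lambda>t. wedge x b l + t * wedge u b l) has_real_derivative wedge u b l) (at 0)"
    by (auto intro!: derivative_eq_intros)
  moreover have "(\<lambda>t. wedge (x + t *\<^sub>R u) b l) = (\<lambda>t. wedge x b l + t * wedge u b l)"
    by (simp add: wedge_add_left wedge_scaleR_left)
  ultimately show "dderiv u (\<lambda>y. wedge y b) x l = wedge u b l"
    unfolding dderiv_def by (simp add: DERIV_imp_deriv)
qed

lemma dquot_wedge: "dquot v (\<lambda>y. wedge y b) x = wedge v b"
proof (cases "x \<bullet> v = 0")
  case False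
  show ?thesis
  proof
    fix l
    have "wedge (refl v x) b l = wedge x b l - (x \<bullet> v) * wedge v b l"
      by (simp add: refl_def wedge_diff_left wedge_scaleR_left)
    with False show "dquot v (\<lambda>y. wedge y b) x l = wedge v b l"
      by (simp add: dquot_def)
  qed
qed (simp add: dquot_def dderiv_wedge)

lemma dunkl_wedge:
  assumes "\<forall>v\<in>Rp. v \<bullet> v = 2" and "alternating b"
  shows "dunkl Rp \<kappa> i (\<lambda>y. wedge y b) x =
    wedge (axis i 1 - \<kappa> *\<^sub>R (\<Sum>v\<in>Rp. v $ i *\<^sub>R v)) b"
proof
  fix l
  have "(\<Sum>v\<in>Rp. v $ i * tau (refl v) (dquot v (\<lambda>y. wedge y b) x) l) =
      (\<Sum>v\<in>Rp. - (v $ i * wedge v b l))"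
    using assms by (intro sum.cong refl) (simp add: dquot_wedge tau_refl_wedge_self)
  moreover have "wedge (axis i 1 - \<kappa> *\<^sub>R (\<Sum>v\<in>Rp. v $ i *\<^sub>R v)) b l =
      wedge (axis i 1) b l - \<kappa> * (\<Sum>v\<in>Rp. v $ i * wedge v b l)"
    by (simp add: wedge_diff_left wedge_scaleR_left wedge_sum_left)
  ultimately show "dunkl Rp \<kappa> i (\<lambda>y. wedge y b) x l =
      wedge (axis i 1 - \<kappa> *\<^sub>R (\<Sum>v\<in>Rp. v $ i *\<^sub>R v)) b l"
    unfolding dunkl_def by (simp add: dderiv_wedge sum_negf)
qed

lemma sum_axis_wedge: "(\<Sum>i\<in>UNIV. a $ i * wedge (axis i 1) b l) = wedge a b l"
proof -
  have "(\<Sum>i\<in>UNIV. a $ i *\<^sub>R axis i 1) = a"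
    by (simp add: vec_eq_iff axis_def if_distrib cong: if_cong)
  then show ?thesis
    using wedge_sum_left[of "\<lambda>i. a $ i *\<^sub>R axis i 1" UNIV b l] by (simp add: wedge_scaleR_left)
qed

section \<open>Root systems\<close>

lemma linear_refl: "linear (refl u)"
  by (rule linearI) (simp_all add: refl_def inner_add_left algebra_simps)

lemma refl_refl: "u \<bullet> u = 2 \<Longrightarrow> refl u (refl u x) = x"
  by (simp add: refl_def inner_diff_left algebra_simps)

lemma refl_self: "u \<bullet> u = 2 \<Longrightarrow> refl u u = - u"
  by (simp add: refl_def vec_eq_iff)

lemma inner_refl_left: "refl u x \<bullet> y = x \<bullet> refl u y"
  by (simp add: refl_def inner_diff_left inner_diff_right inner_commute)

lemma root_system_inner_self: "root_system R \<Longrightarrow> v \<in> R \<Longrightarrow> v \<bullet> v = 2"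
  by (simp add: root_system_def)

lemma root_system_uminus: "root_system R \<Longrightarrow> v \<in> R \<Longrightarrow> - v \<in> R"
  by (metis refl_self root_system_def)

lemma root_system_nonempty: "root_system R \<Longrightarrow> R \<noteq> {}"
  unfolding root_system_def by (metis UNIV_I axis_nth span_empty singletonD zero_index zero_neq_one)

definition root_operator :: "(real^'n) set \<Rightarrow> real^'n \<Rightarrow> real^'n" where
  "root_operator R x = (\<Sum>v\<in>R. (x \<bullet> v) *\<^sub>R v)"

lemma linear_root_operator: "linear (root_operator R)"
  unfolding root_operator_def
  by (rule linearI) (simp_all add: inner_add_left scaleR_add_left sum.distrib scaleR_sum_right)

lemma root_operator_refl:
  assumes "root_system R" and "u \<in> R"
  shows "root_operator R (refl u x) = refl u (root_operator R x)"
proof -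
  have uu: "u \<bullet> u = 2" using assms by (rule root_system_inner_self)
  have "bij_betw (refl u) R R"
    by (rule bij_betwI[where g = "refl u"])
      (use assms uu in \<open>auto simp: root_system_def refl_refl\<close>)
  then have "(\<Sum>v\<in>R. (x \<bullet> refl u v) *\<^sub>R v) = (\<Sum>v\<in>R. (x \<bullet> refl u (refl u v)) *\<^sub>R refl u v)"
    using sum.reindex_bij_betw[of "refl u" R R "\<lambda>v. (x \<bullet> refl u v) *\<^sub>R v"] by simp
  also have "\<dots> = (\<Sum>v\<in>R. refl u ((x \<bullet> v) *\<^sub>R v))"
    by (simp add: refl_refl[OF uu] linear_scale[OF linear_refl])
  finally show ?thesis
    unfolding root_operator_def by (simp add: inner_refl_left linear_sum[OF linear_refl])
qed

lemma linear_refl_group: "w \<in> refl_group R \<Longrightarrow> linear w"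
proof (induction rule: refl_group.induct)
  case id_in
  show ?case by (rule linear_id)
next
  case (step v w)
  show ?case by (rule linear_compose[OF step.IH linear_refl])
qed

lemma root_operator_refl_group:
  assumes "root_system R" and "w \<in> refl_group R"
  shows "root_operator R (w x) = w (root_operator R x)"
  using assms(2) by (induction arbitrary: x) (simp_all add: root_operator_refl[OF assms(1)])

text \<open>Apply \<open>root_operator R\<close>, which commutes with \<open>\<sigma>\<^sub>u\<close>, to \<open>\<sigma>\<^sub>u u = -u\<close>.\<close>
lemma root_operator_root:
  assumes "root_system R" and "u \<in> R"
  shows "root_operator R u = ((root_operator R u \<bullet> u) / 2) *\<^sub>R u"
proof -
  have "root_operator R (- u) = refl u (root_operator R u)"
    using root_operator_refl[OF assms] refl_self[OF root_system_inner_self[OF assms]] by metis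
  then have "- root_operator R u = root_operator R u - (root_operator R u \<bullet> u) *\<^sub>R u"
    by (simp only: linear_neg[OF linear_root_operator] refl_def)
  then show ?thesis
    by (simp add: vec_eq_iff field_simps)
qed

lemma inner_root_operator_root_eq:
  assumes R: "root_system R" "one_refl_class R" and "u \<in> R" "v \<in> R"
  shows "root_operator R u \<bullet> u = root_operator R v \<bullet> v"
proof -
  let ?c = "\<lambda>u. (root_operator R u \<bullet> u) / 2"
  obtain w where w: "w \<in> refl_group R" and "refl (w v) = refl u"
    using assms unfolding one_refl_class_def by blast
  then have "u - (u \<bullet> w v) *\<^sub>R w v = - u"
    using refl_self[OF root_system_inner_self[OF R(1) \<open>u \<in> R\<close>]] by (metis refl_def)
  then have u: "u = ((u \<bullet> w v) / 2) *\<^sub>R w v"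
    by (simp add: vec_eq_iff field_simps)
  have "root_operator R u = ((u \<bullet> w v) / 2) *\<^sub>R w (root_operator R v)"
    by (subst u) (simp add: linear_scale[OF linear_root_operator] root_operator_refl_group[OF R(1) w])
  also have "w (root_operator R v) = ?c v *\<^sub>R w v"
    using root_operator_root[OF R(1) \<open>v \<in> R\<close>] linear_scale[OF linear_refl_group[OF w]]
    by metis
  also have "((u \<bullet> w v) / 2) *\<^sub>R ?c v *\<^sub>R w v = ?c v *\<^sub>R ((u \<bullet> w v) / 2) *\<^sub>R w v"
    by (simp add: mult.commute)
  also have "\<dots> = ?c v *\<^sub>R u"
    by (simp only: u[symmetric])
  finally have "?c u *\<^sub>R u = ?c v *\<^sub>R u"
    using root_operator_root[OF R(1) \<open>u \<in> R\<close>] by simp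
  moreover have "u \<noteq> 0" using R(1) \<open>u \<in> R\<close> by (auto simp: root_system_def)
  ultimately show ?thesis by simp
qed

lemma root_operator_scalar:
  assumes "root_system R" and "one_refl_class R"
  obtains c where "\<And>x. root_operator R x = c *\<^sub>R x"
proof -
  obtain v where v: "v \<in> R" using root_system_nonempty[OF assms(1)] by blast
  let ?c = "(root_operator R v \<bullet> v) / 2"
  have "root_operator R u = ?c *\<^sub>R u" if "u \<in> R" for u
    using root_operator_root[OF assms(1) that] inner_root_operator_root_eq[OF assms that v] by simp
  then have "root_operator R x = ?c *\<^sub>R x" if "x \<in> span R" for x
    using linear_eq_on_span[OF linear_root_operator linear_scale_self] that by blast
  moreover have "span R = UNIV" using assms(1) by (simp add: root_system_def)
  ultimately show thesis using that by blast
qed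

lemma positive_system_subset: "positive_system R Rp \<Longrightarrow> Rp \<subseteq> R"
  by (auto simp: positive_system_def)

lemma positive_system_finite: "root_system R \<Longrightarrow> positive_system R Rp \<Longrightarrow> finite Rp"
  by (metis finite_subset positive_system_subset root_system_def)

lemma positive_system_partition:
  assumes "root_system R" and "positive_system R Rp"
  shows "R = Rp \<union> uminus ` Rp" and "Rp \<inter> uminus ` Rp = {}"
proof -
  obtain u where u: "\<forall>v\<in>R. v \<bullet> u \<noteq> 0" and Rp: "Rp = {v\<in>R. v \<bullet> u > 0}"
    using assms(2) unfolding positive_system_def by blast
  have "v \<in> Rp \<union> uminus ` Rp" if "v \<in> R" for v
  proof (cases "v \<bullet> u > 0")
    case False
    then have "- v \<in> Rp"
      using u that root_system_uminus[OF assms(1) that] by (force simp: Rp inner_minus_left)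
    then show ?thesis by (metis UnI2 image_eqI minus_minus)
  qed (use that Rp in auto)
  then show "R = Rp \<union> uminus ` Rp"
    using root_system_uminus[OF assms(1)] Rp by auto
  show "Rp \<inter> uminus ` Rp = {}"
    by (auto simp: Rp inner_minus_left)
qed

lemma root_operator_positive_system:
  assumes "root_system R" and "positive_system R Rp"
  shows "root_operator R x = 2 *\<^sub>R (\<Sum>v\<in>Rp. (x \<bullet> v) *\<^sub>R v)"
proof -
  have "finite Rp" using assms by (rule positive_system_finite)
  then have "root_operator R x = (\<Sum>v\<in>Rp. (x \<bullet> v) *\<^sub>R v) + (\<Sum>v\<in>uminus ` Rp. (x \<bullet> v) *\<^sub>R v)"
    unfolding root_operator_def positive_system_partition(1)[OF assms]
    by (intro sum.union_disjoint positive_system_partition(2)[OF assms]) auto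
  also have "(\<Sum>v\<in>uminus ` Rp. (x \<bullet> v) *\<^sub>R v) = (\<Sum>v\<in>Rp. (x \<bullet> v) *\<^sub>R v)"
    by (subst sum.reindex) (auto simp: inj_on_def)
  finally show ?thesis by (simp add: scaleR_2)
qed

text \<open>The scalar is found by taking traces: the trace of \<open>x \<mapsto> \<langle>x,v\<rangle> v\<close> is \<open>|v|\<^sup>2 = 2\<close>.\<close>
lemma positive_root_sum_eq_coxeter:
  fixes R Rp :: "(real^'n) set"
  assumes "root_system R" and "positive_system R Rp" and "one_refl_class R"
  shows "(\<Sum>v\<in>Rp. (x \<bullet> v) *\<^sub>R v) = coxeter_number Rp *\<^sub>R x"
proof -
  obtain c where c: "\<And>x. root_operator R x = c *\<^sub>R x"
    using root_operator_scalar[OF assms(1,3)] by blast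
  have half: "(\<Sum>v\<in>Rp. (x \<bullet> v) *\<^sub>R v) = (c / 2) *\<^sub>R x" for x
    using root_operator_positive_system[OF assms(1,2), of x] c[of x] by (simp add: vec_eq_iff)
  have "real CARD('n) * (c / 2) = (\<Sum>i\<in>UNIV. (\<Sum>v\<in>Rp. (axis i 1 \<bullet> v) *\<^sub>R v) $ i)"
    by (simp add: half)
  also have "\<dots> = (\<Sum>v\<in>Rp. \<Sum>i\<in>UNIV. v $ i * v $ i)"
    by (simp add: inner_axis' sum.swap[of _ Rp])
  also have "\<dots> = (\<Sum>v\<in>Rp. v \<bullet> v)"
    by (simp add: inner_vec_def)
  also have "\<dots> = 2 * real (card Rp)"
    using assms(1) positive_system_subset[OF assms(2)] by (simp add: root_system_inner_self subset_iff)
  finally have "c / 2 = coxeter_number Rp"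
    by (simp add: coxeter_number_def field_simps)
  then show ?thesis by (simp add: half)
qed

lemma coxeter_number_pos:
  assumes "root_system R" and "positive_system R Rp"
  shows "coxeter_number Rp > 0"
proof -
  have "finite Rp" using assms by (rule positive_system_finite)
  moreover have "Rp \<noteq> {}"
    using root_system_nonempty[OF assms(1)] positive_system_partition(1)[OF assms] by auto
  ultimately show ?thesis
    by (simp add: coxeter_number_def card_gt_0_iff)
qed

theorem theorem3p5:
  fixes R Rp :: "(real^'n) set" and \<kappa> :: real and m :: nat
    and a :: "real^'n" and b :: "'n list \<Rightarrow> real"
  assumes "root_system R" and "positive_system R Rp" and "one_refl_class R"
    and "1 \<le> m" and "m \<le> CARD('n)" and "b \<in> ext_space m"
  shows "(\<forall>l. linear (\<lambda>x. wedge x b l)) \<and> (\<forall>x. wedge x b \<in> ext_space (m + 1))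
    \<and> (\<forall>x. (\<lambda>l. \<Sum>i\<in>UNIV. a $ i * dunkl Rp \<kappa> i (\<lambda>y. wedge y b) x l)
            = (\<lambda>l. (1 - coxeter_number Rp * \<kappa>) * wedge a b l))
    \<and> (\<kappa> = 1 / coxeter_number Rp \<longrightarrow> (\<forall>i x. dunkl Rp \<kappa> i (\<lambda>y. wedge y b) x = (\<lambda>l. 0)))"
proof -
  let ?\<gamma> = "coxeter_number Rp"
  have norms: "\<forall>v\<in>Rp. v \<bullet> v = 2"
    using assms(1) positive_system_subset[OF assms(2)] root_system_inner_self by blast
  have "axis i 1 - \<kappa> *\<^sub>R (\<Sum>v\<in>Rp. v $ i *\<^sub>R v) = (1 - ?\<gamma> * \<kappa>) *\<^sub>R axis i 1" for i
    using positive_root_sum_eq_coxeter[OF assms(1-3), of "axis i 1"]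
    by (simp add: inner_axis' algebra_simps)
  then have dunkl:
    "dunkl Rp \<kappa> i (\<lambda>y. wedge y b) x l = (1 - ?\<gamma> * \<kappa>) * wedge (axis i 1) b l" for i x l
    by (simp add: dunkl_wedge[OF norms ext_space_alternating[OF assms(6)]] wedge_scaleR_left)
  have "(\<Sum>i\<in>UNIV. a $ i * dunkl Rp \<kappa> i (\<lambda>y. wedge y b) x l) =
      (1 - ?\<gamma> * \<kappa>) * (\<Sum>i\<in>UNIV. a $ i * wedge (axis i 1) b l)" for x l
    by (simp add: dunkl sum_distrib_left mult_ac)
  then have sum_eq: "(\<lambda>l. \<Sum>i\<in>UNIV. a $ i * dunkl Rp \<kappa> i (\<lambda>y. wedge y b) x l) =
      (\<lambda>l. (1 - ?\<gamma> * \<kappa>) * wedge a b l)" for x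
    by (simp only: sum_axis_wedge)
  have singular: "dunkl Rp \<kappa> i (\<lambda>y. wedge y b) x = (\<lambda>l. 0)" if "\<kappa> = 1 / ?\<gamma>" for i x
  proof -
    have "1 - ?\<gamma> * \<kappa> = 0" using that coxeter_number_pos[OF assms(1,2)] by simp
    then show ?thesis by (simp add: dunkl fun_eq_iff)
  qed
  have "wedge x b \<in> ext_space (m + 1)" for x
    using wedge_in_ext_space[OF assms(6)] by simp
  then show ?thesis
    using linear_wedge sum_eq singular by blast
qed

end
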